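(* Let $G$ and $H$ be two vertex-disjoint directed co-graphs. Then $\mathrm{tw}(\mathrm{un}(G\oslash H))>\mathrm{dtw}(G\oslash H)$.
   Context: Digraphs are finite, without loops or multiple arcs. Operations on vertex-disjoint digraphs $G_1,\ldots,G_k$: disjoint union $\oplus$ (union of vertex and arc sets); series composition $\otimes$ (disjoint union plus all arcs in both directions between vertices of different $G_i$); order composition $G_1\oslash\cdots\oslash G_k$ (disjoint union plus all arcs from vertices of $G_i$ to vertices of $G_j$ for $i<j$). Directed co-graphs: single-vertex digraphs, and closure under these three operations. $\mathrm{un}(G)$ is the underlying undirected graph of $G$ and $\mathrm{tw}$ is undirected tree-width. Directed tree-width: for $Z\subseteq V$, $S\subseteq V$ is $Z$-normal if no directed walk in $G-Z$ with first and last vertex in $S$ uses a vertex of $G-(Z\cup S)$. A directed tree-decomposition is $(T,\mathcal{X},\mathcal{W})$ with $T=(V_T,E_T)$ an out-tree (rooted, arcs directed away from root; $u\le v$ means a directed path of $\ge0$ arcs from $u$ to $v$), $\mathcal{X}=\{X_e:e\in E_T\}$, $\mathcal{W}=\{W_r:r\in V_T\}$ subsets of $V$, such that $\mathcal{W}$ partitions $V$ into nonempty sets and for each $(u,v)\in E_T$ the set $\bigcup\{W_r: v\le r\}$ is $X_{(u,v)}$-normal; width $\max_r|W_r\cup\bigcup_{e\sim r}X_e|-1$ ($e\sim r$: $r$ is an end of $e$); $\mathrm{dtw}(G)$ is the minimum width. *)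

theory Defs
  imports Main
begin

text \<open>A digraph is a pair (vertex set, arc set). Well-formedness (finite, no loops,
arcs between vertices) is guaranteed for directed co-graphs by construction.\<close>

type_synonym 'a digraph = "'a set \<times> ('a \<times> 'a) set"

definition verts :: "'a digraph \<Rightarrow> 'a set" where "verts G = fst G"
definition arcs :: "'a digraph \<Rightarrow> ('a \<times> 'a) set" where "arcs G = snd G"

definition vdisjoint :: "'a digraph \<Rightarrow> 'a digraph \<Rightarrow> bool" where
  "vdisjoint G H \<longleftrightarrow> verts G \<inter> verts H = {}"

text \<open>disjoint union, series composition, order composition (binary versions;
the k-ary operations are iterations of these, as they are associative)\<close>

definition disj_union :: "'a digraph \<Rightarrow> 'a digraph \<Rightarrow> 'a digraph" where
  "disj_union G H = (verts G \<union> verts H, arcs G \<union> arcs H)"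

definition series_comp :: "'a digraph \<Rightarrow> 'a digraph \<Rightarrow> 'a digraph" where
  "series_comp G H = (verts G \<union> verts H,
     arcs G \<union> arcs H \<union> (verts G \<times> verts H) \<union> (verts H \<times> verts G))"

definition order_comp :: "'a digraph \<Rightarrow> 'a digraph \<Rightarrow> 'a digraph" where
  "order_comp G H = (verts G \<union> verts H, arcs G \<union> arcs H \<union> (verts G \<times> verts H))"

inductive dcograph :: "'a digraph \<Rightarrow> bool" where
  single: "dcograph ({v}, {})"
| union: "dcograph G \<Longrightarrow> dcograph H \<Longrightarrow> vdisjoint G H \<Longrightarrow> dcograph (disj_union G H)"
| series: "dcograph G \<Longrightarrow> dcograph H \<Longrightarrow> vdisjoint G H \<Longrightarrow> dcograph (series_comp G H)"
| order: "dcograph G \<Longrightarrow> dcograph H \<Longrightarrow> vdisjoint G H \<Longrightarrow> dcograph (order_comp G H)"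

type_synonym 'a ugraph = "'a set \<times> 'a set set"

definition un :: "'a digraph \<Rightarrow> 'a ugraph" where
  "un G = (verts G, {{u, v} | u v. (u, v) \<in> arcs G})"

definition tedge :: "'b set set \<Rightarrow> ('b \<times> 'b) set" where
  "tedge ET = {(x, y). {x, y} \<in> ET}"

definition utree :: "nat set \<Rightarrow> nat set set \<Rightarrow> bool" where
  "utree N ET \<longleftrightarrow> finite N \<and> N \<noteq> {}
     \<and> ET \<subseteq> {{x, y} | x y. x \<in> N \<and> y \<in> N \<and> x \<noteq> y}
     \<and> (\<forall>x\<in>N. \<forall>y\<in>N. (x, y) \<in> (tedge ET)\<^sup>*)
     \<and> card ET + 1 = card N"

definition connected_in :: "nat set set \<Rightarrow> nat set \<Rightarrow> bool" where
  "connected_in ET S \<longleftrightarrow> (\<forall>x\<in>S. \<forall>y\<in>S. (x, y) \<in> (tedge ET \<inter> S \<times> S)\<^sup>*)"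

definition tree_decomp :: "'a ugraph \<Rightarrow> nat set \<Rightarrow> nat set set \<Rightarrow> (nat \<Rightarrow> 'a set) \<Rightarrow> bool" where
  "tree_decomp G N ET \<beta> \<longleftrightarrow> utree N ET
     \<and> (\<forall>t\<in>N. \<beta> t \<subseteq> fst G)
     \<and> (\<forall>v\<in>fst G. \<exists>t\<in>N. v \<in> \<beta> t)
     \<and> (\<forall>e\<in>snd G. \<exists>t\<in>N. e \<subseteq> \<beta> t)
     \<and> (\<forall>v\<in>fst G. connected_in ET {t \<in> N. v \<in> \<beta> t})"

definition td_width :: "nat set \<Rightarrow> (nat \<Rightarrow> 'a set) \<Rightarrow> nat" where
  "td_width N \<beta> = Max ((\<lambda>t. card (\<beta> t)) ` N) - 1"

definition tw :: "'a ugraph \<Rightarrow> nat" where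
  "tw G = (LEAST w. \<exists>N ET \<beta>. tree_decomp G N ET \<beta> \<and> td_width N \<beta> = w)"

definition dwalk :: "'a digraph \<Rightarrow> 'a list \<Rightarrow> bool" where
  "dwalk G ws \<longleftrightarrow> ws \<noteq> [] \<and> set ws \<subseteq> verts G
     \<and> (\<forall>i. Suc i < length ws \<longrightarrow> (ws ! i, ws ! Suc i) \<in> arcs G)"

definition del_verts :: "'a digraph \<Rightarrow> 'a set \<Rightarrow> 'a digraph" where
  "del_verts G Z = (verts G - Z, {(u, v) \<in> arcs G. u \<notin> Z \<and> v \<notin> Z})"

definition normal :: "'a digraph \<Rightarrow> 'a set \<Rightarrow> 'a set \<Rightarrow> bool" where
  "normal G Z S \<longleftrightarrow> (\<forall>ws. dwalk (del_verts G Z) ws \<and> hd ws \<in> S \<and> last ws \<in> S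
      \<longrightarrow> set ws \<inter> (verts G - (Z \<union> S)) = {})"

definition out_tree :: "nat set \<Rightarrow> (nat \<times> nat) set \<Rightarrow> nat \<Rightarrow> bool" where
  "out_tree VT ET r \<longleftrightarrow> finite VT \<and> r \<in> VT \<and> ET \<subseteq> VT \<times> VT
     \<and> (\<forall>u. (u, r) \<notin> ET)
     \<and> (\<forall>v\<in>VT. v \<noteq> r \<longrightarrow> (\<exists>!u. (u, v) \<in> ET))
     \<and> (\<forall>v\<in>VT. (r, v) \<in> ET\<^sup>*)"

definition dtree_decomp :: "'a digraph \<Rightarrow> nat set \<Rightarrow> (nat \<times> nat) set \<Rightarrow> nat
     \<Rightarrow> (nat \<times> nat \<Rightarrow> 'a set) \<Rightarrow> (nat \<Rightarrow> 'a set) \<Rightarrow> bool" where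
  "dtree_decomp G VT ET r X W \<longleftrightarrow> out_tree VT ET r
     \<and> (\<forall>e\<in>ET. X e \<subseteq> verts G)
     \<and> (\<forall>t\<in>VT. W t \<noteq> {} \<and> W t \<subseteq> verts G)
     \<and> (\<forall>s\<in>VT. \<forall>t\<in>VT. s \<noteq> t \<longrightarrow> W s \<inter> W t = {})
     \<and> (\<Union>t\<in>VT. W t) = verts G
     \<and> (\<forall>(u, v)\<in>ET. normal G (X (u, v)) (\<Union>t\<in>{t \<in> VT. (v, t) \<in> ET\<^sup>*}. W t))"

definition dtd_width :: "nat set \<Rightarrow> (nat \<times> nat) set \<Rightarrow> (nat \<times> nat \<Rightarrow> 'a set) \<Rightarrow> (nat \<Rightarrow> 'a set) \<Rightarrow> nat" where
  "dtd_width VT ET X W =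
     Max ((\<lambda>t. card (W t \<union> (\<Union>e\<in>{e \<in> ET. fst e = t \<or> snd e = t}. X e))) ` VT) - 1"

definition dtw :: "'a digraph \<Rightarrow> nat" where
  "dtw G = (LEAST w. \<exists>VT ET r X W. dtree_decomp G VT ET r X W \<and> dtd_width VT ET X W = w)"

end

theory Submission
  imports Defs
begin

(* Along the co-graph construction one finds, for every directed co-graph D, a number k such that
   D has a directed tree decomposition all of whose bags (together with the guards of the incident
   arcs) have at most k vertices, so dtw D < k, while un D has a bramble of order at least k, so
   tw (un D) >= k - 1.  Disjoint unions take the larger k.  For series and order compositions of G
   and H one takes min (|G| + k_H) (k_G + |H|): the brambles of G and H together with all pairs
   {a, b}, a in G, b in H, form a bramble of the join, and a decomposition of the series composition
   is obtained from one of G by adding all of H to every guard and to the root bag.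
   For the order composition the decompositions of G and H can instead be glued by a new arc with
   empty guard, because no arc leads back from H to G.  This gives
   dtw (order_comp G H) < max k_G k_H <= min (|G| + k_H) (k_G + |H|) - 1 <= tw (un (order_comp G H)).
   The tree-width bound is the bramble argument: by the Helly property of subtrees of a tree, some
   bag meets every element of a bramble. *)

section \<open>Pairwise intersecting subtrees of a tree\<close>

definition pendant :: "'b set set \<Rightarrow> 'b \<Rightarrow> 'b \<Rightarrow> bool" where
  "pendant E l p \<longleftrightarrow> l \<noteq> p \<and> {l, p} \<in> E \<and> (\<forall>e\<in>E. l \<in> e \<longrightarrow> e = {l, p})"

lemma pendant_tedgeD:
  assumes "pendant E l p"
  shows "(l, z) \<in> tedge E \<Longrightarrow> z = p" and "(z, l) \<in> tedge E \<Longrightarrow> z = p"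
  using assms unfolding pendant_def tedge_def by (auto simp: doubleton_eq_iff)

lemma utree_edgeE:
  assumes "utree N E" "e \<in> E"
  obtains x y where "e = {x, y}" "x \<in> N" "y \<in> N" "x \<noteq> y"
  using assms unfolding utree_def by blast

lemma utree_finite_edges: "utree N E \<Longrightarrow> finite E"
  unfolding utree_def by (auto intro: finite_subset[of _ "Pow N"])

lemma utree_connected_in: "utree N E \<Longrightarrow> connected_in E N"
proof -
  assume tree: "utree N E"
  then have "tedge E \<inter> N \<times> N = tedge E"
    unfolding tedge_def by (auto elim: utree_edgeE simp: doubleton_eq_iff)
  then show ?thesis
    using tree unfolding utree_def connected_in_def by simp
qed

lemma utree_has_pendant:
  assumes tree: "utree N E" and two: "2 \<le> card N"
  obtains l p where "l \<in> N" "p \<in> N" "pendant E l p"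
proof -
  have finN: "finite N" and finE: "finite E" and size: "card E + 1 = card N"
    using tree utree_finite_edges unfolding utree_def by auto
  have "(\<Sum>x\<in>N. card {e\<in>E. x \<in> e}) = 2 * card E"
  proof (rule sum_multicount[OF finN finE], intro ballI)
    fix e assume "e \<in> E"
    with tree obtain x y where "e = {x, y}" "x \<in> N" "y \<in> N" "x \<noteq> y"
      by (rule utree_edgeE)
    then have "{x\<in>N. x \<in> e} = {x, y}" by auto
    then show "card {x\<in>N. x \<in> e} = 2"
      using \<open>x \<noteq> y\<close> by simp
  qed
  \<comment> \<open>the degrees sum to \<open>2 * card E = 2 * card N - 2\<close>, so some degree is below 2\<close>
  moreover have "(\<Sum>x\<in>N. card {e\<in>E. x \<in> e}) \<ge> 2 * card N" if "\<forall>x\<in>N. 2 \<le> card {e\<in>E. x \<in> e}"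
    using sum_mono[of N "\<lambda>_. 2::nat"] that by (simp add: mult.commute)
  ultimately obtain l where lN: "l \<in> N" and deg: "card {e\<in>E. l \<in> e} < 2"
    using size by force
  obtain y where yN: "y \<in> N" and "y \<noteq> l"
    using two lN finN by (metis card_le_Suc0_iff_eq not_less_eq_eq numeral_2_eq_2)
  with tree lN obtain p where lp: "(l, p) \<in> tedge E"
    unfolding utree_def by (metis converse_rtranclE)
  then have edge: "{l, p} \<in> E" unfolding tedge_def by simp
  then have "p \<in> N" "l \<noteq> p"
    using tree by (auto elim!: utree_edgeE simp: doubleton_eq_iff)
  moreover have "e = {l, p}" if "e \<in> E" "l \<in> e" for e
  proof -
    have "card {e\<in>E. l \<in> e} \<le> Suc 0" using deg by simp
    then show ?thesis
      using that edge finE by (subst (asm) card_le_Suc0_iff_eq) auto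
  qed
  ultimately show thesis
    using that lN edge unfolding pendant_def by blast
qed

lemma rtrancl_avoid_pendant:
  assumes path: "(x, y) \<in> R\<^sup>*" and "x \<noteq> l" "y \<noteq> l" "p \<noteq> l"
    and out: "\<And>z. (l, z) \<in> R \<Longrightarrow> z = p" and into: "\<And>z. (z, l) \<in> R \<Longrightarrow> z = p"
  shows "(x, y) \<in> (R \<inter> (- {l}) \<times> (- {l}))\<^sup>*"
proof -
  \<comment> \<open>a visit to \<open>l\<close> is a detour \<open>p \<rightarrow> l \<rightarrow> p\<close>, so the walk can stop at \<open>p\<close> instead\<close>
  have "(x, if y = l then p else y) \<in> (R \<inter> (- {l}) \<times> (- {l}))\<^sup>*"
    using path
  proof (induction rule: rtrancl_induct)
    case (step y z)
    consider "z = l" | "y = l" "z \<noteq> l" | "y \<noteq> l" "z \<noteq> l" by blast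
    then show ?case
    proof cases
      case 1
      then show ?thesis using step into[of y] \<open>p \<noteq> l\<close> by simp
    next
      case 2
      then show ?thesis using step out[of z] by simp
    next
      case 3
      then show ?thesis using step by (simp add: rtrancl_into_rtrancl)
    qed
  qed (use \<open>x \<noteq> l\<close> in simp)
  then show ?thesis using \<open>y \<noteq> l\<close> by simp
qed

lemma connected_in_remove_pendant:
  assumes "pendant E l p" and conn: "connected_in E S"
  shows "connected_in (E - {{l, p}}) (S - {l})"
  unfolding connected_in_def
proof (intro ballI)
  fix x y assume x: "x \<in> S - {l}" and y: "y \<in> S - {l}"
  have "p \<noteq> l" using assms(1) unfolding pendant_def by blast
  have "(x, y) \<in> (tedge E \<inter> S \<times> S)\<^sup>*"
    using conn x y unfolding connected_in_def by blast
  then have "(x, y) \<in> (tedge E \<inter> S \<times> S \<inter> (- {l}) \<times> (- {l}))\<^sup>*"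
    using x y \<open>p \<noteq> l\<close> pendant_tedgeD[OF assms(1)] by (intro rtrancl_avoid_pendant) blast+
  moreover have "tedge E \<inter> S \<times> S \<inter> (- {l}) \<times> (- {l}) \<subseteq> tedge (E - {{l, p}}) \<inter> (S - {l}) \<times> (S - {l})"
    by (auto simp: tedge_def doubleton_eq_iff)
  ultimately show "(x, y) \<in> (tedge (E - {{l, p}}) \<inter> (S - {l}) \<times> (S - {l}))\<^sup>*"
    by (rule rtrancl_mono[THEN subsetD, rotated])
qed

lemma pendant_connected_in:
  assumes "pendant E l p" "connected_in E S" "l \<in> S" "x \<in> S" "x \<noteq> l"
  shows "p \<in> S"
proof -
  have "(l, x) \<in> (tedge E \<inter> S \<times> S)\<^sup>*"
    using assms(2-4) unfolding connected_in_def by blast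
  then obtain z where "(l, z) \<in> tedge E \<inter> S \<times> S"
    using \<open>x \<noteq> l\<close> by (cases rule: converse_rtranclE) auto
  then show ?thesis using pendant_tedgeD[OF assms(1)] by blast
qed

lemma utree_remove_pendant:
  assumes tree: "utree N E" and "pendant E l p" "l \<in> N" "p \<in> N"
  shows "utree (N - {l}) (E - {{l, p}})"
proof -
  have finN: "finite N" and finE: "finite E" and size: "card E + 1 = card N"
    using tree utree_finite_edges unfolding utree_def by auto
  have "{l, p} \<in> E" "l \<noteq> p" using \<open>pendant E l p\<close> unfolding pendant_def by auto
  have conn: "connected_in (E - {{l, p}}) (N - {l})"
    using connected_in_remove_pendant[OF \<open>pendant E l p\<close> utree_connected_in[OF tree]] .
  have edges: "E - {{l, p}} \<subseteq> {{x, y} | x y. x \<in> N - {l} \<and> y \<in> N - {l} \<and> x \<noteq> y}"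
  proof
    fix e assume e: "e \<in> E - {{l, p}}"
    then have "l \<notin> e" using \<open>pendant E l p\<close> unfolding pendant_def by blast
    from e tree obtain x y where "e = {x, y}" "x \<in> N" "y \<in> N" "x \<noteq> y"
      by (blast elim: utree_edgeE)
    with \<open>l \<notin> e\<close> show "e \<in> {{x, y} | x y. x \<in> N - {l} \<and> y \<in> N - {l} \<and> x \<noteq> y}"
      by blast
  qed
  have reach: "\<forall>x\<in>N - {l}. \<forall>y\<in>N - {l}. (x, y) \<in> (tedge (E - {{l, p}}))\<^sup>*"
    using conn rtrancl_mono[of "tedge (E - {{l, p}}) \<inter> _"] unfolding connected_in_def by blast
  have "card (E - {{l, p}}) + 1 = card (N - {l})"
  proof -
    have "card E > 0" using finE \<open>{l, p} \<in> E\<close> card_gt_0_iff by blast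
    then show ?thesis using size finE \<open>{l, p} \<in> E\<close> \<open>l \<in> N\<close> by (simp add: card_Diff_singleton)
  qed
  moreover have "N - {l} \<noteq> {}" using \<open>p \<in> N\<close> \<open>l \<noteq> p\<close> by blast
  ultimately show ?thesis
    using finN edges reach unfolding utree_def by simp
qed

lemma subtrees_remove_pendant:
  assumes pend: "pendant E l p" and "{l} \<notin> F"
    and subtree: "\<And>S. S \<in> F \<Longrightarrow> S \<noteq> {} \<and> S \<subseteq> N \<and> connected_in E S"
    and meet: "\<And>S S'. S \<in> F \<Longrightarrow> S' \<in> F \<Longrightarrow> S \<inter> S' \<noteq> {}"
  shows "S \<in> (\<lambda>S. S - {l}) ` F \<Longrightarrow> S \<noteq> {} \<and> S \<subseteq> N - {l} \<and> connected_in (E - {{l, p}}) S"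
    and "S \<in> (\<lambda>S. S - {l}) ` F \<Longrightarrow> S' \<in> (\<lambda>S. S - {l}) ` F \<Longrightarrow> S \<inter> S' \<noteq> {}"
proof -
  have "l \<noteq> p" using pend unfolding pendant_def by blast
  have big: "A - {l} \<noteq> {}" if "A \<in> F" for A
    using \<open>{l} \<notin> F\<close> subtree[OF that] that by (metis Diff_eq_empty_iff subset_singleton_iff)
  show "S \<noteq> {} \<and> S \<subseteq> N - {l} \<and> connected_in (E - {{l, p}}) S" if "S \<in> (\<lambda>S. S - {l}) ` F"
  proof -
    obtain A where A: "A \<in> F" and S: "S = A - {l}" using \<open>S \<in> (\<lambda>S. S - {l}) ` F\<close> by blast
    have "A \<subseteq> N" "connected_in E A" using subtree[OF A] by auto
    then show ?thesis
      using big[OF A] connected_in_remove_pendant[OF pend] unfolding S by blast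
  qed
  \<comment> \<open>two members meeting only in the leaf \<open>l\<close> both contain its neighbour \<open>p\<close>\<close>
  have p: "p \<in> A" if "A \<in> F" "l \<in> A" for A
  proof -
    obtain x where "x \<in> A" "x \<noteq> l" using big[OF \<open>A \<in> F\<close>] by blast
    moreover have "connected_in E A" using subtree[OF \<open>A \<in> F\<close>] by blast
    ultimately show ?thesis
      using pendant_connected_in[OF pend] \<open>l \<in> A\<close> by blast
  qed
  show "S \<inter> S' \<noteq> {}" if members: "S \<in> (\<lambda>S. S - {l}) ` F" "S' \<in> (\<lambda>S. S - {l}) ` F"
  proof -
    obtain A B where "A \<in> F" "B \<in> F" "S = A - {l}" "S' = B - {l}"
      using members by blast
    moreover have "A \<inter> B \<noteq> {}" using meet \<open>A \<in> F\<close> \<open>B \<in> F\<close> by blast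
    ultimately show ?thesis
      using p[of A] p[of B] \<open>l \<noteq> p\<close> by blast
  qed
qed

theorem helly_subtrees:
  assumes "utree N E"
    and "\<And>S. S \<in> F \<Longrightarrow> S \<noteq> {} \<and> S \<subseteq> N \<and> connected_in E S"
    and "\<And>S S'. S \<in> F \<Longrightarrow> S' \<in> F \<Longrightarrow> S \<inter> S' \<noteq> {}"
  shows "\<exists>t\<in>N. \<forall>S\<in>F. t \<in> S"
  using assms
proof (induction "card N" arbitrary: N E F rule: less_induct)
  case less
  note tree = less.prems(1) and subtree = less.prems(2) and meet = less.prems(3)
  have finN: "finite N" and "N \<noteq> {}" using tree unfolding utree_def by auto
  show ?case
  proof (cases "card N \<le> 1")
    case True
    then obtain t where "N = {t}"
      using finN \<open>N \<noteq> {}\<close> by (metis card_0_eq card_1_singletonE le_eq_less_or_eq less_one)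
    then show ?thesis using subtree by fastforce
  next
    case False
    then have "2 \<le> card N" by simp
    with tree obtain l p where "l \<in> N" "p \<in> N" and pend: "pendant E l p"
      by (rule utree_has_pendant)
    show ?thesis
    proof (cases "{l} \<in> F")
      case True
      then have "l \<in> S" if "S \<in> F" for S using meet[OF True that] by blast
      then show ?thesis using \<open>l \<in> N\<close> by blast
    next
      case False
      have "\<exists>t\<in>N - {l}. \<forall>S\<in>(\<lambda>S. S - {l}) ` F. t \<in> S"
      proof (rule less.hyps)
        show "card (N - {l}) < card N"
          using finN \<open>l \<in> N\<close> by (simp add: card_gt_0_iff \<open>N \<noteq> {}\<close>)
        show "utree (N - {l}) (E - {{l, p}})"
          using tree pend \<open>l \<in> N\<close> \<open>p \<in> N\<close> by (rule utree_remove_pendant)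
      qed (use subtrees_remove_pendant[OF pend False subtree meet] in blast)+
      then obtain t where "t \<in> N" "\<forall>S\<in>F. t \<in> S - {l}" by auto
      then show ?thesis by blast
    qed
  qed
qed

section \<open>Brambles\<close>

text \<open>\<open>uconnected\<close> generalises \<open>connected_in\<close>, which is fixed to the node type of tree decompositions.\<close>

definition uconnected :: "'a set set \<Rightarrow> 'a set \<Rightarrow> bool" where
  "uconnected E X \<longleftrightarrow> (\<forall>x\<in>X. \<forall>y\<in>X. (x, y) \<in> (tedge E \<inter> X \<times> X)\<^sup>*)"

definition touching :: "'a set set \<Rightarrow> 'a set \<Rightarrow> 'a set \<Rightarrow> bool" where
  "touching E X Y \<longleftrightarrow> X \<inter> Y \<noteq> {} \<or> (\<exists>x\<in>X. \<exists>y\<in>Y. {x, y} \<in> E)"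

definition bramble :: "'a ugraph \<Rightarrow> 'a set set \<Rightarrow> bool" where
  "bramble U B \<longleftrightarrow> (\<forall>X\<in>B. X \<noteq> {} \<and> X \<subseteq> fst U \<and> uconnected (snd U) X)
     \<and> (\<forall>X\<in>B. \<forall>Y\<in>B. touching (snd U) X Y)"

definition bramble_order_ge :: "'a set set \<Rightarrow> nat \<Rightarrow> bool" where
  "bramble_order_ge B k \<longleftrightarrow> (\<forall>S. finite S \<longrightarrow> (\<forall>X\<in>B. S \<inter> X \<noteq> {}) \<longrightarrow> k \<le> card S)"

definition has_bramble :: "'a ugraph \<Rightarrow> nat \<Rightarrow> bool" where
  "has_bramble U k \<longleftrightarrow> (\<exists>B. bramble U B \<and> bramble_order_ge B k)"

lemma tree_decompD:
  assumes "tree_decomp U N E \<beta>"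
  shows "utree N E" and "t \<in> N \<Longrightarrow> \<beta> t \<subseteq> fst U" and "v \<in> fst U \<Longrightarrow> \<exists>t\<in>N. v \<in> \<beta> t"
    and "e \<in> snd U \<Longrightarrow> \<exists>t\<in>N. e \<subseteq> \<beta> t" and "v \<in> fst U \<Longrightarrow> connected_in E {t \<in> N. v \<in> \<beta> t}"
  using assms unfolding tree_decomp_def by blast+

lemma tree_decomp_bags_meeting_connected:
  assumes td: "tree_decomp U N E \<beta>" and "X \<subseteq> fst U" and conn: "uconnected (snd U) X"
  shows "connected_in E {t\<in>N. \<beta> t \<inter> X \<noteq> {}}"
proof -
  define T where "T = {t\<in>N. \<beta> t \<inter> X \<noteq> {}}"
  define R where "R = tedge E \<inter> T \<times> T"
  have same_vertex: "(s, t) \<in> R\<^sup>*" if "v \<in> X" "s \<in> N" "v \<in> \<beta> s" "t \<in> N" "v \<in> \<beta> t" for v s t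
  proof -
    let ?Tv = "{t \<in> N. v \<in> \<beta> t}"
    have "connected_in E ?Tv" using tree_decompD(5)[OF td] \<open>v \<in> X\<close> \<open>X \<subseteq> fst U\<close> by blast
    then have "(s, t) \<in> (tedge E \<inter> ?Tv \<times> ?Tv)\<^sup>*" using that unfolding connected_in_def by blast
    moreover have "tedge E \<inter> ?Tv \<times> ?Tv \<subseteq> R" unfolding R_def T_def using \<open>v \<in> X\<close> by blast
    ultimately show ?thesis using rtrancl_mono by blast
  qed
  \<comment> \<open>follow a path of \<open>X\<close> edge by edge: each edge lies in some bag\<close>
  have path: "(s, t) \<in> R\<^sup>*"
    if "(x, y) \<in> (tedge (snd U) \<inter> X \<times> X)\<^sup>*" and s: "x \<in> X" "s \<in> N" "x \<in> \<beta> s"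
      and "t \<in> N" "y \<in> \<beta> t" for x y s t
    using that(1,6,5)
  proof (induction arbitrary: t rule: rtrancl_induct)
    case base
    then show ?case using same_vertex[OF s] by blast
  next
    case (step y z)
    then have "{y, z} \<in> snd U" "z \<in> X" unfolding tedge_def by auto
    then obtain u where u: "u \<in> N" "{y, z} \<subseteq> \<beta> u" using tree_decompD(4)[OF td] by blast
    then have "(s, u) \<in> R\<^sup>*" using step.IH by blast
    moreover have "(u, t) \<in> R\<^sup>*" using same_vertex[of z u t] \<open>z \<in> X\<close> u step.prems by blast
    ultimately show ?case by (rule rtrancl_trans)
  qed
  show ?thesis
    unfolding connected_in_def T_def[symmetric] R_def[symmetric]
  proof (intro ballI)
    fix s t assume "s \<in> T" "t \<in> T"
    then obtain x y where "x \<in> X" "x \<in> \<beta> s" "s \<in> N" "y \<in> X" "y \<in> \<beta> t" "t \<in> N"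
      unfolding T_def by blast
    moreover have "(x, y) \<in> (tedge (snd U) \<inter> X \<times> X)\<^sup>*"
      using conn \<open>x \<in> X\<close> \<open>y \<in> X\<close> unfolding uconnected_def by blast
    ultimately show "(s, t) \<in> R\<^sup>*" using path by blast
  qed
qed

lemma tree_decomp_bag_hits_bramble:
  assumes td: "tree_decomp U N E \<beta>" and br: "bramble U B"
  obtains t where "t \<in> N" "\<And>X. X \<in> B \<Longrightarrow> \<beta> t \<inter> X \<noteq> {}"
proof -
  let ?F = "(\<lambda>X. {t\<in>N. \<beta> t \<inter> X \<noteq> {}}) ` B"
  have "\<exists>t\<in>N. \<forall>S\<in>?F. t \<in> S"
  proof (rule helly_subtrees)
    show "utree N E" using tree_decompD(1)[OF td] .
    show "S \<noteq> {} \<and> S \<subseteq> N \<and> connected_in E S" if "S \<in> ?F" for S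
    proof -
      obtain X where "X \<in> B" and S: "S = {t\<in>N. \<beta> t \<inter> X \<noteq> {}}" using \<open>S \<in> ?F\<close> by blast
      then have X: "X \<noteq> {}" "X \<subseteq> fst U" "uconnected (snd U) X"
        using br unfolding bramble_def by auto
      then obtain x where "x \<in> X" "x \<in> fst U" by blast
      then have "S \<noteq> {}" using tree_decompD(3)[OF td] unfolding S by blast
      then show ?thesis using tree_decomp_bags_meeting_connected[OF td X(2,3)] S by blast
    qed
    show "S \<inter> S' \<noteq> {}" if members: "S \<in> ?F" "S' \<in> ?F" for S S'
    proof -
      obtain X Y where "X \<in> B" "Y \<in> B" and S: "S = {t\<in>N. \<beta> t \<inter> X \<noteq> {}}"
        and S': "S' = {t\<in>N. \<beta> t \<inter> Y \<noteq> {}}" using members by blast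
      then have "X \<subseteq> fst U" "touching (snd U) X Y" using br unfolding bramble_def by auto
      then obtain x y where "x \<in> X" "y \<in> Y" and xy: "x = y \<or> {x, y} \<in> snd U"
        unfolding touching_def by blast
      have "\<exists>t\<in>N. {x, y} \<subseteq> \<beta> t"
        using xy
      proof
        assume "x = y"
        then show ?thesis using tree_decompD(3)[OF td] \<open>x \<in> X\<close> \<open>X \<subseteq> fst U\<close> by auto
      next
        assume "{x, y} \<in> snd U"
        then show ?thesis using tree_decompD(4)[OF td] by blast
      qed
      then obtain t where "t \<in> N" "x \<in> \<beta> t" "y \<in> \<beta> t" by blast
      then show ?thesis using \<open>x \<in> X\<close> \<open>y \<in> Y\<close> unfolding S S' by blast
    qed
  qed
  then obtain t where "t \<in> N" "\<forall>S\<in>?F. t \<in> S" ..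
  then show thesis by (intro that) auto
qed

lemma has_bramble_imp_tw_ge:
  assumes "finite (fst U)" "\<forall>e\<in>snd U. e \<subseteq> fst U" and "has_bramble U k"
  shows "k \<le> tw U + 1"
proof -
  have "tree_decomp U {0} {} (\<lambda>_. fst U)"
    using assms(2) unfolding tree_decomp_def utree_def connected_in_def tedge_def by auto
  then have "\<exists>w N E \<beta>. tree_decomp U N E \<beta> \<and> td_width N \<beta> = w" by blast
  from LeastI_ex[OF this] have "\<exists>N E \<beta>. tree_decomp U N E \<beta> \<and> td_width N \<beta> = tw U"
    unfolding tw_def .
  then obtain N E \<beta> where td: "tree_decomp U N E \<beta>" and width: "td_width N \<beta> = tw U" by blast
  obtain B where br: "bramble U B" and order: "bramble_order_ge B k"
    using \<open>has_bramble U k\<close> unfolding has_bramble_def by blast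
  obtain t where "t \<in> N" and hits: "\<And>X. X \<in> B \<Longrightarrow> \<beta> t \<inter> X \<noteq> {}"
    using tree_decomp_bag_hits_bramble[OF td br] by blast
  have "\<beta> t \<subseteq> fst U" using tree_decompD(2)[OF td \<open>t \<in> N\<close>] .
  then have "k \<le> card (\<beta> t)"
    using order hits finite_subset[OF _ assms(1)] unfolding bramble_order_ge_def by blast
  also have "\<dots> \<le> Max ((\<lambda>t. card (\<beta> t)) ` N)"
    using tree_decompD(1)[OF td] \<open>t \<in> N\<close> unfolding utree_def by simp
  finally show ?thesis using width unfolding td_width_def by linarith
qed

lemma has_bramble_le_card:
  assumes "finite (fst U)" "has_bramble U k"
  shows "k \<le> card (fst U)"
proof -
  obtain B where "bramble U B" "bramble_order_ge B k"
    using assms(2) unfolding has_bramble_def by blast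
  moreover have "fst U \<inter> X \<noteq> {}" if "X \<in> B" "bramble U B" for X B
    using that unfolding bramble_def by blast
  ultimately show ?thesis using assms(1) unfolding bramble_order_ge_def by blast
qed

lemma uconnected_mono:
  assumes "uconnected E X" "E \<subseteq> E'"
  shows "uconnected E' X"
proof -
  have "tedge E \<inter> X \<times> X \<subseteq> tedge E' \<inter> X \<times> X" using assms(2) by (auto simp: tedge_def)
  from rtrancl_mono[OF this] show ?thesis using assms(1) unfolding uconnected_def by blast
qed

lemma bramble_mono:
  assumes "bramble U B" "fst U \<subseteq> fst U'" "snd U \<subseteq> snd U'"
  shows "bramble U' B"
proof -
  have "touching (snd U') X Y" if "touching (snd U) X Y" for X Y
    using that assms(3) unfolding touching_def by blast
  then show ?thesis
    using assms uconnected_mono[of "snd U" _ "snd U'"] unfolding bramble_def by (meson order_trans)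
qed

lemma has_bramble_mono:
  assumes "has_bramble U k" "fst U \<subseteq> fst U'" "snd U \<subseteq> snd U'" "k' \<le> k"
  shows "has_bramble U' k'"
proof -
  obtain B where br: "bramble U B" and order: "bramble_order_ge B k"
    using assms(1) unfolding has_bramble_def by blast
  have "bramble U' B" using br assms(2,3) by (rule bramble_mono)
  moreover have "bramble_order_ge B k'"
    using order assms(4) unfolding bramble_order_ge_def by (meson order_trans)
  ultimately show ?thesis unfolding has_bramble_def by blast
qed

lemma has_bramble_singleton: "has_bramble ({v}, E) 1"
proof -
  have "bramble ({v}, E) {{v}}"
    unfolding bramble_def uconnected_def touching_def by simp
  moreover have "bramble_order_ge {{v}} 1"
    unfolding bramble_order_ge_def by (auto simp: Suc_le_eq card_gt_0_iff)
  ultimately show ?thesis unfolding has_bramble_def by blast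
qed

lemma uconnected_edge: "{a, b} \<in> E \<Longrightarrow> uconnected E {a, b}"
  unfolding uconnected_def tedge_def by (auto simp: insert_commute)

lemma bramble_join:
  assumes brG: "bramble (VG, EG) BG" and brH: "bramble (VH, EH) BH"
  defines "P \<equiv> {{a, b} | a b. a \<in> VG \<and> b \<in> VH}"
  shows "bramble (VG \<union> VH, EG \<union> EH \<union> P) (BG \<union> BH \<union> P)"
proof -
  let ?E = "EG \<union> EH \<union> P"
  have brG': "bramble (VG \<union> VH, ?E) BG" by (rule bramble_mono[OF brG]) auto
  have brH': "bramble (VG \<union> VH, ?E) BH" by (rule bramble_mono[OF brH]) auto
  have cross: "touching ?E X Y"
    if "x \<in> X" "y \<in> Y" "x \<in> VG \<and> y \<in> VH \<or> x \<in> VH \<and> y \<in> VG" for X Y x y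
    using that unfolding touching_def P_def by (auto simp: insert_commute)
  have meetG: "X \<inter> VG \<noteq> {}" if "X \<in> BG \<union> P" for X
    using that brG unfolding bramble_def P_def by fastforce
  have meetH: "X \<inter> VH \<noteq> {}" if "X \<in> BH \<union> P" for X
    using that brH unfolding bramble_def P_def by fastforce
  have "X \<noteq> {} \<and> X \<subseteq> VG \<union> VH \<and> uconnected ?E X" if "X \<in> BG \<union> BH \<union> P" for X
    using that brG' brH' uconnected_edge[of _ _ ?E] unfolding bramble_def P_def by auto
  moreover have "touching ?E X Y" if XY: "X \<in> BG \<union> BH \<union> P" "Y \<in> BG \<union> BH \<union> P" for X Y
  proof -
    consider "X \<in> BG" "Y \<in> BG" | "X \<in> BH" "Y \<in> BH"
      | "X \<in> BG \<union> P" "Y \<in> BH \<union> P" | "X \<in> BH \<union> P" "Y \<in> BG \<union> P"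
      using XY by blast
    then show ?thesis
    proof cases
      case 1
      then show ?thesis using brG' by (simp add: bramble_def)
    next
      case 2
      then show ?thesis using brH' by (simp add: bramble_def)
    next
      case 3
      then obtain x y where "x \<in> X" "x \<in> VG" "y \<in> Y" "y \<in> VH"
        using meetG meetH by blast
      then show ?thesis using cross by blast
    next
      case 4
      then obtain x y where "x \<in> X" "x \<in> VH" "y \<in> Y" "y \<in> VG"
        using meetG meetH by blast
      then show ?thesis using cross by blast
    qed
  qed
  ultimately show ?thesis unfolding bramble_def by auto
qed

lemma bramble_order_ge_join:
  assumes "bramble_order_ge BG kG" "bramble_order_ge BH kH"
    and "\<forall>X\<in>BG. X \<subseteq> VG" "\<forall>X\<in>BH. X \<subseteq> VH" "VG \<inter> VH = {}"
  shows "bramble_order_ge (BG \<union> BH \<union> {{a, b} | a b. a \<in> VG \<and> b \<in> VH})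
    (min (card VG + kH) (kG + card VH))"
  unfolding bramble_order_ge_def
proof (intro allI impI)
  fix S assume "finite S" and hits: "\<forall>X\<in>BG \<union> BH \<union> {{a, b} | a b. a \<in> VG \<and> b \<in> VH}. S \<inter> X \<noteq> {}"
  have hitG: "S \<inter> X \<noteq> {}" if "X \<in> BG" for X using hits that by blast
  have hitH: "S \<inter> X \<noteq> {}" if "X \<in> BH" for X using hits that by blast
  have hitP: "S \<inter> {a, b} \<noteq> {}" if "a \<in> VG" "b \<in> VH" for a b using hits that by blast
  have "\<forall>X\<in>BG. S \<inter> VG \<inter> X \<noteq> {}" using hitG assms(3) by blast
  then have kG: "kG \<le> card (S \<inter> VG)"
    using assms(1) \<open>finite S\<close> unfolding bramble_order_ge_def by simp
  have "\<forall>X\<in>BH. S \<inter> VH \<inter> X \<noteq> {}" using hitH assms(4) by blast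
  then have kH: "kH \<le> card (S \<inter> VH)"
    using assms(2) \<open>finite S\<close> unfolding bramble_order_ge_def by simp
  have "card (S \<inter> VG) + card (S \<inter> VH) = card (S \<inter> VG \<union> S \<inter> VH)"
    using \<open>finite S\<close> assms(5) by (intro card_Un_disjoint[symmetric]) auto
  also have "\<dots> \<le> card S"
    using \<open>finite S\<close> by (intro card_mono) auto
  finally have split: "card (S \<inter> VG) + card (S \<inter> VH) \<le> card S" .
  \<comment> \<open>otherwise some pair \<open>{a, b}\<close> with \<open>a \<in> VG\<close>, \<open>b \<in> VH\<close> would escape \<open>S\<close>\<close>
  have "VG \<subseteq> S \<or> VH \<subseteq> S"
  proof (rule ccontr)
    assume "\<not> (VG \<subseteq> S \<or> VH \<subseteq> S)"
    then obtain a b where "a \<in> VG" "b \<in> VH" "a \<notin> S" "b \<notin> S" by blast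
    then show False using hitP by blast
  qed
  then have "S \<inter> VG = VG \<or> S \<inter> VH = VH" by blast
  then show "min (card VG + kH) (kG + card VH) \<le> card S"
    using kG kH split by (elim disjE) (simp_all add: min_le_iff_disj)
qed

lemma has_bramble_join:
  assumes "has_bramble (VG, EG) kG" "has_bramble (VH, EH) kH" "VG \<inter> VH = {}"
  shows "has_bramble (VG \<union> VH, EG \<union> EH \<union> {{a, b} | a b. a \<in> VG \<and> b \<in> VH})
    (min (card VG + kH) (kG + card VH))"
proof -
  obtain BG BH where brG: "bramble (VG, EG) BG" "bramble_order_ge BG kG"
    and brH: "bramble (VH, EH) BH" "bramble_order_ge BH kH"
    using assms(1,2) unfolding has_bramble_def by blast
  have "\<forall>X\<in>BG. X \<subseteq> VG" "\<forall>X\<in>BH. X \<subseteq> VH"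
    using brG(1) brH(1) by (simp_all add: bramble_def)
  then show ?thesis
    using bramble_join[OF brG(1) brH(1)] bramble_order_ge_join[OF brG(2) brH(2) _ _ assms(3)]
    unfolding has_bramble_def by blast
qed

section \<open>Walks and normal sets\<close>

lemma verts_pair [simp]: "verts (V, A) = V" and arcs_pair [simp]: "arcs (V, A) = A"
  by (simp_all add: verts_def arcs_def)

lemma verts_disj_union [simp]: "verts (disj_union G H) = verts G \<union> verts H"
  and arcs_disj_union [simp]: "arcs (disj_union G H) = arcs G \<union> arcs H"
  and verts_series_comp [simp]: "verts (series_comp G H) = verts G \<union> verts H"
  and arcs_series_comp [simp]: "arcs (series_comp G H) = arcs G \<union> arcs H \<union> verts G \<times> verts H \<union> verts H \<times> verts G"
  and verts_order_comp [simp]: "verts (order_comp G H) = verts G \<union> verts H"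
  and arcs_order_comp [simp]: "arcs (order_comp G H) = arcs G \<union> arcs H \<union> verts G \<times> verts H"
  and verts_del_verts [simp]: "verts (del_verts G Z) = verts G - Z"
  and arcs_del_verts [simp]: "arcs (del_verts G Z) = {(u, v) \<in> arcs G. u \<notin> Z \<and> v \<notin> Z}"
  by (simp_all add: disj_union_def series_comp_def order_comp_def del_verts_def)

lemma series_comp_commute: "series_comp G H = series_comp H G"
  unfolding series_comp_def by auto

lemma dwalk_mono:
  assumes "dwalk D ws" "verts D \<subseteq> verts D'" "arcs D \<subseteq> arcs D'"
  shows "dwalk D' ws"
  using assms unfolding dwalk_def by blast

lemma dwalk_induced:
  assumes "dwalk (del_verts D Z) ws" "set ws \<subseteq> verts G" "arcs D \<inter> verts G \<times> verts G \<subseteq> arcs G"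
  shows "dwalk (del_verts G Z) ws"
  unfolding dwalk_def
proof (intro conjI allI impI)
  show "ws \<noteq> []" "set ws \<subseteq> verts (del_verts G Z)"
    using assms(1,2) unfolding dwalk_def by auto
  fix i assume "Suc i < length ws"
  then have "ws ! i \<in> verts G" "ws ! Suc i \<in> verts G"
    using assms(2) nth_mem[of i ws] nth_mem[of "Suc i" ws] by auto
  then show "(ws ! i, ws ! Suc i) \<in> arcs (del_verts G Z)"
    using assms(1,3) \<open>Suc i < length ws\<close> unfolding dwalk_def by auto
qed

lemma dwalk_nth_closed:
  assumes "dwalk D ws" "\<forall>(a, b)\<in>arcs D. a \<in> P \<longrightarrow> b \<in> P" "ws ! i \<in> P" "i \<le> j" "j < length ws"
  shows "ws ! j \<in> P"
  using assms(4,5)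
proof (induction j)
  case (Suc j)
  then show ?case
    using assms(1-3) unfolding dwalk_def by (cases "i = Suc j") auto
qed (use assms(3) in simp)

lemma dwalk_forward_closed:
  assumes "dwalk D ws" "\<forall>(a, b)\<in>arcs D. a \<in> P \<longrightarrow> b \<in> P" "hd ws \<in> P"
  shows "set ws \<subseteq> P"
proof
  fix x assume "x \<in> set ws"
  then obtain j where "j < length ws" "x = ws ! j" by (auto simp: in_set_conv_nth)
  moreover have "ws ! 0 \<in> P" using assms(1,3) unfolding dwalk_def by (simp add: hd_conv_nth)
  ultimately show "x \<in> P" using dwalk_nth_closed[OF assms(1,2)] by blast
qed

lemma dwalk_backward_closed:
  assumes "dwalk D ws" "\<forall>(a, b)\<in>arcs D. b \<in> P \<longrightarrow> a \<in> P" "last ws \<in> P"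
  shows "set ws \<subseteq> P"
proof
  fix x assume "x \<in> set ws"
  then obtain j where j: "j < length ws" "x = ws ! j" by (auto simp: in_set_conv_nth)
  have last: "ws ! (length ws - 1) \<in> P" using assms(1,3) unfolding dwalk_def by (simp add: last_conv_nth)
  have closed: "\<forall>(a, b)\<in>arcs D. a \<in> - P \<longrightarrow> b \<in> - P" using assms(2) by blast
  show "x \<in> P"
  proof (rule ccontr)
    assume "x \<notin> P"
    then have "ws ! (length ws - 1) \<in> - P"
      using dwalk_nth_closed[OF assms(1) closed, of j "length ws - 1"] j by simp
    with last show False by simp
  qed
qed

lemma normal_transfer:
  assumes "normal G Z S" "Z \<subseteq> Z'"
    and "\<And>ws. dwalk (del_verts D Z') ws \<Longrightarrow> hd ws \<in> S \<Longrightarrow> last ws \<in> S \<Longrightarrow> dwalk (del_verts G Z) ws"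
  shows "normal D Z' S"
  unfolding normal_def
proof (intro allI impI)
  fix ws assume ws: "dwalk (del_verts D Z') ws \<and> hd ws \<in> S \<and> last ws \<in> S"
  then have "dwalk (del_verts G Z) ws" using assms(3) by blast
  then have "set ws \<subseteq> verts G - Z" and "set ws \<inter> (verts G - (Z \<union> S)) = {}"
    using assms(1) ws unfolding normal_def dwalk_def by auto
  then show "set ws \<inter> (verts D - (Z' \<union> S)) = {}" by blast
qed

lemma normal_arcs_mono:
  assumes "normal D Z S" "verts D' = verts D" "arcs D' \<subseteq> arcs D"
  shows "normal D' Z S"
proof (rule normal_transfer[OF assms(1) order_refl])
  fix ws assume "dwalk (del_verts D' Z) ws"
  then show "dwalk (del_verts D Z) ws" by (rule dwalk_mono) (use assms(2,3) in auto)
qed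

lemma normal_order_comp_left:
  assumes "normal G Z S" "S \<subseteq> verts G"
    and "arcs G \<subseteq> verts G \<times> verts G" "arcs H \<subseteq> verts H \<times> verts H" "verts G \<inter> verts H = {}"
  shows "normal (order_comp G H) Z S"
proof (rule normal_transfer[OF assms(1) order_refl])
  fix ws assume ws: "dwalk (del_verts (order_comp G H) Z) ws" "hd ws \<in> S" "last ws \<in> S"
  \<comment> \<open>no arc enters \<open>G\<close> from \<open>H\<close>, so a walk ending in \<open>G\<close> never leaves it\<close>
  have "\<forall>(a, b)\<in>arcs (del_verts (order_comp G H) Z). b \<in> verts G \<longrightarrow> a \<in> verts G"
    using assms(3-5) by auto
  then have "set ws \<subseteq> verts G" using dwalk_backward_closed[OF ws(1)] ws(3) assms(2) by blast
  moreover have "arcs (order_comp G H) \<inter> verts G \<times> verts G \<subseteq> arcs G" using assms(4,5) by auto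
  ultimately show "dwalk (del_verts G Z) ws" by (rule dwalk_induced[OF ws(1)])
qed

lemma normal_order_comp_right:
  assumes "normal H Z S" "S \<subseteq> verts H"
    and "arcs G \<subseteq> verts G \<times> verts G" "arcs H \<subseteq> verts H \<times> verts H" "verts G \<inter> verts H = {}"
  shows "normal (order_comp G H) Z S"
proof (rule normal_transfer[OF assms(1) order_refl])
  fix ws assume ws: "dwalk (del_verts (order_comp G H) Z) ws" "hd ws \<in> S" "last ws \<in> S"
  have "\<forall>(a, b)\<in>arcs (del_verts (order_comp G H) Z). a \<in> verts H \<longrightarrow> b \<in> verts H"
    using assms(3-5) by auto
  then have "set ws \<subseteq> verts H" using dwalk_forward_closed[OF ws(1)] ws(2) assms(2) by blast
  moreover have "arcs (order_comp G H) \<inter> verts H \<times> verts H \<subseteq> arcs H" using assms(3,5) by auto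
  ultimately show "dwalk (del_verts H Z) ws" by (rule dwalk_induced[OF ws(1)])
qed

lemma normal_series_comp:
  assumes "normal G Z S" "arcs G \<subseteq> verts G \<times> verts G" "arcs H \<subseteq> verts H \<times> verts H"
  shows "normal (series_comp G H) (Z \<union> verts H) S"
proof (rule normal_transfer[OF assms(1)])
  show "Z \<subseteq> Z \<union> verts H" by blast
  fix ws assume "dwalk (del_verts (series_comp G H) (Z \<union> verts H)) ws"
  then show "dwalk (del_verts G Z) ws" by (rule dwalk_mono) (use assms(2,3) in auto)
qed

section \<open>Out-trees\<close>

lemma out_treeD:
  assumes "out_tree VT ET r"
  shows "finite VT" and "r \<in> VT" and "ET \<subseteq> VT \<times> VT" and "(u, r) \<notin> ET"
    and "v \<in> VT \<Longrightarrow> v \<noteq> r \<Longrightarrow> \<exists>!u. (u, v) \<in> ET" and "v \<in> VT \<Longrightarrow> (r, v) \<in> ET\<^sup>*"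
  using assms unfolding out_tree_def by blast+

lemma out_tree_rtrancl_to_root: "out_tree VT ET r \<Longrightarrow> (v, r) \<in> ET\<^sup>* \<Longrightarrow> v = r"
  by (erule rtranclE) (auto dest: out_treeD(4))

lemma rtrancl_map_prod: "(a, b) \<in> R\<^sup>* \<Longrightarrow> (f a, f b) \<in> (map_prod f f ` R)\<^sup>*"
proof (induction rule: rtrancl_induct)
  case (step y z)
  then have "(f y, f z) \<in> map_prod f f ` R" by force
  with step.IH show ?case by (rule rtrancl_into_rtrancl)
qed simp

lemma rtrancl_map_prod_inj:
  assumes "inj f"
  shows "(f a, f b) \<in> (map_prod f f ` R)\<^sup>* \<longleftrightarrow> (a, b) \<in> R\<^sup>*"
proof
  have "map_prod (inv f) (inv f) ` map_prod f f ` R = R"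
    by (simp add: image_image prod.map_comp inv_o_cancel[OF assms] prod.map_id)
  then show "(a, b) \<in> R\<^sup>*" if "(f a, f b) \<in> (map_prod f f ` R)\<^sup>*"
    using rtrancl_map_prod[OF that, of "inv f"] by (simp add: inv_f_f[OF assms])
qed (rule rtrancl_map_prod)

lemma rtrancl_Un_confined:
  assumes "(a, b) \<in> (R \<union> R')\<^sup>*" "a \<in> A"
    and "\<forall>(x, y)\<in>R. x \<in> A \<longrightarrow> y \<in> A" "\<forall>(x, y)\<in>R'. x \<notin> A"
  shows "(a, b) \<in> R\<^sup>*" and "b \<in> A"
proof -
  have "(a, b) \<in> R\<^sup>* \<and> b \<in> A"
    using assms(1)
  proof (induction rule: rtrancl_induct)
    case (step y z)
    then have "(y, z) \<in> R" "z \<in> A" using assms(3,4) by auto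
    moreover have "(a, y) \<in> R\<^sup>*" using step.IH by simp
    ultimately show ?case by (simp add: rtrancl.rtrancl_into_rtrancl)
  qed (use assms(2) in simp)
  then show "(a, b) \<in> R\<^sup>*" and "b \<in> A" by simp_all
qed

lemma out_tree_relabel:
  assumes "inj f" and tree: "out_tree VT ET r"
  shows "out_tree (f ` VT) (map_prod f f ` ET) (f r)"
proof -
  let ?ET = "map_prod f f ` ET"
  have arc: "(f a, f b) \<in> ?ET \<longleftrightarrow> (a, b) \<in> ET" for a b
    using \<open>inj f\<close> by (auto simp: inj_eq)
  have parent: "\<exists>!u. (u, f w) \<in> ?ET" if w: "w \<in> VT" "w \<noteq> r" for w
  proof -
    obtain u where "(u, w) \<in> ET" and unique: "\<And>u'. (u', w) \<in> ET \<Longrightarrow> u' = u"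
      using out_treeD(5)[OF tree w] by blast
    show ?thesis
    proof (rule ex1I)
      show "(f u, f w) \<in> ?ET" using arc \<open>(u, w) \<in> ET\<close> by simp
      show "u' = f u" if "(u', f w) \<in> ?ET" for u'
        using that unique \<open>inj f\<close> by (auto simp: inj_eq)
    qed
  qed
  show ?thesis
    unfolding out_tree_def
  proof (intro conjI ballI allI impI)
    show "finite (f ` VT)" "f r \<in> f ` VT" "?ET \<subseteq> f ` VT \<times> f ` VT"
      using out_treeD(1-3)[OF tree] by auto
    show "(u, f r) \<notin> ?ET" for u
      using out_treeD(4)[OF tree] \<open>inj f\<close> by (auto simp: inj_eq)
    show "\<exists>!u. (u, v) \<in> ?ET" if "v \<in> f ` VT" "v \<noteq> f r" for v
    proof -
      obtain w where "w \<in> VT" "v = f w" using \<open>v \<in> f ` VT\<close> by blast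
      moreover have "w \<noteq> r" using \<open>v \<noteq> f r\<close> \<open>v = f w\<close> by blast
      ultimately show ?thesis using parent by simp
    qed
    show "(f r, v) \<in> ?ET\<^sup>*" if "v \<in> f ` VT" for v
    proof -
      obtain w where "w \<in> VT" "v = f w" using \<open>v \<in> f ` VT\<close> by blast
      then show ?thesis using rtrancl_map_prod[OF out_treeD(6)[OF tree \<open>w \<in> VT\<close>]] by simp
    qed
  qed
qed

lemma out_tree_glue:
  assumes tree1: "out_tree VT1 ET1 r1" and tree2: "out_tree VT2 ET2 r2" and "VT1 \<inter> VT2 = {}"
  shows "out_tree (VT1 \<union> VT2) (insert (r1, r2) (ET1 \<union> ET2)) r1"
proof -
  let ?ET = "insert (r1, r2) (ET1 \<union> ET2)"
  note sub1 = out_treeD(3)[OF tree1] and sub2 = out_treeD(3)[OF tree2]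
  have "r1 \<in> VT1" "r2 \<in> VT2" using out_treeD(2) tree1 tree2 by blast+
  have parents1: "(u, v) \<in> ?ET \<longleftrightarrow> (u, v) \<in> ET1" if "v \<in> VT1" for u v
    using that sub2 \<open>VT1 \<inter> VT2 = {}\<close> \<open>r2 \<in> VT2\<close> by auto
  have parents2: "(u, v) \<in> ?ET \<longleftrightarrow> (u, v) \<in> ET2" if "v \<in> VT2" "v \<noteq> r2" for u v
    using that sub1 \<open>VT1 \<inter> VT2 = {}\<close> by auto
  have parents_r2: "(u, r2) \<in> ?ET \<longleftrightarrow> u = r1" for u
    using sub1 out_treeD(4)[OF tree2] \<open>VT1 \<inter> VT2 = {}\<close> \<open>r2 \<in> VT2\<close> by auto
  show ?thesis
    unfolding out_tree_def
  proof (intro conjI ballI allI impI)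
    show "finite (VT1 \<union> VT2)" using out_treeD(1) tree1 tree2 by blast
    show "r1 \<in> VT1 \<union> VT2" using \<open>r1 \<in> VT1\<close> by blast
    show "?ET \<subseteq> (VT1 \<union> VT2) \<times> (VT1 \<union> VT2)" using sub1 sub2 \<open>r1 \<in> VT1\<close> \<open>r2 \<in> VT2\<close> by blast
    show "(u, r1) \<notin> ?ET" for u
      using parents1[OF \<open>r1 \<in> VT1\<close>] out_treeD(4)[OF tree1] by blast
    show "\<exists>!u. (u, v) \<in> ?ET" if "v \<in> VT1 \<union> VT2" "v \<noteq> r1" for v
    proof -
      consider "v \<in> VT1" | "v = r2" | "v \<in> VT2" "v \<noteq> r2" using \<open>v \<in> VT1 \<union> VT2\<close> by blast
      then show ?thesis
      proof cases
        case 1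
        then show ?thesis using parents1[OF 1] out_treeD(5)[OF tree1 1 \<open>v \<noteq> r1\<close>] by simp
      next
        case 2
        then show ?thesis using parents_r2 by simp
      next
        case 3
        then show ?thesis using parents2[OF 3] out_treeD(5)[OF tree2 3] by simp
      qed
    qed
    show "(r1, v) \<in> ?ET\<^sup>*" if "v \<in> VT1 \<union> VT2" for v
    proof -
      have "ET1\<^sup>* \<subseteq> ?ET\<^sup>*" "ET2\<^sup>* \<subseteq> ?ET\<^sup>*" by (simp_all add: rtrancl_mono subset_insertI2)
      moreover have "(r1, r2) \<in> ?ET" by simp
      ultimately show ?thesis
        using that out_treeD(6)[OF tree1, of v] out_treeD(6)[OF tree2, of v]
        by (auto intro: converse_rtrancl_into_rtrancl)
    qed
  qed
qed

lemma out_tree_glue_descendants: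
  assumes tree1: "out_tree VT1 ET1 r1" and tree2: "out_tree VT2 ET2 r2" and "VT1 \<inter> VT2 = {}"
  shows "v \<in> VT1 \<Longrightarrow> v \<noteq> r1 \<Longrightarrow>
      {t \<in> VT1 \<union> VT2. (v, t) \<in> (insert (r1, r2) (ET1 \<union> ET2))\<^sup>*} = {t \<in> VT1. (v, t) \<in> ET1\<^sup>*}"
    and "v \<in> VT2 \<Longrightarrow>
      {t \<in> VT1 \<union> VT2. (v, t) \<in> (insert (r1, r2) (ET1 \<union> ET2))\<^sup>*} = {t \<in> VT2. (v, t) \<in> ET2\<^sup>*}"
proof -
  let ?ET = "insert (r1, r2) (ET1 \<union> ET2)"
  note sub1 = out_treeD(3)[OF tree1] and sub2 = out_treeD(3)[OF tree2]
  have "r1 \<in> VT1" using out_treeD(2)[OF tree1] .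
  show "{t \<in> VT1 \<union> VT2. (v, t) \<in> ?ET\<^sup>*} = {t \<in> VT1. (v, t) \<in> ET1\<^sup>*}" if "v \<in> VT1" "v \<noteq> r1"
  proof -
    have "?ET = ET1 \<union> insert (r1, r2) ET2" by blast
    moreover have "\<forall>(x, y)\<in>ET1. x \<in> VT1 - {r1} \<longrightarrow> y \<in> VT1 - {r1}"
      using sub1 out_treeD(4)[OF tree1] by blast
    moreover have "\<forall>(x, y)\<in>insert (r1, r2) ET2. x \<notin> VT1 - {r1}"
      using sub2 \<open>VT1 \<inter> VT2 = {}\<close> by blast
    ultimately have "(v, t) \<in> ET1\<^sup>* \<and> t \<in> VT1" if "(v, t) \<in> ?ET\<^sup>*" for t
      using rtrancl_Un_confined[of v t ET1 "insert (r1, r2) ET2" "VT1 - {r1}"] \<open>(v, t) \<in> ?ET\<^sup>*\<close>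
        \<open>v \<in> VT1\<close> \<open>v \<noteq> r1\<close> by simp
    moreover have "ET1\<^sup>* \<subseteq> ?ET\<^sup>*" by (simp add: rtrancl_mono subset_insertI2)
    ultimately show ?thesis by blast
  qed
  show "{t \<in> VT1 \<union> VT2. (v, t) \<in> ?ET\<^sup>*} = {t \<in> VT2. (v, t) \<in> ET2\<^sup>*}" if "v \<in> VT2"
  proof -
    have "?ET = ET2 \<union> insert (r1, r2) ET1" by blast
    moreover have "\<forall>(x, y)\<in>ET2. x \<in> VT2 \<longrightarrow> y \<in> VT2" using sub2 by blast
    moreover have "\<forall>(x, y)\<in>insert (r1, r2) ET1. x \<notin> VT2"
      using sub1 \<open>r1 \<in> VT1\<close> \<open>VT1 \<inter> VT2 = {}\<close> by blast
    ultimately have "(v, t) \<in> ET2\<^sup>* \<and> t \<in> VT2" if "(v, t) \<in> ?ET\<^sup>*" for t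
      using rtrancl_Un_confined[of v t ET2 "insert (r1, r2) ET1" VT2] \<open>(v, t) \<in> ?ET\<^sup>*\<close>
        \<open>v \<in> VT2\<close> by simp
    moreover have "ET2\<^sup>* \<subseteq> ?ET\<^sup>*" by (simp add: rtrancl_mono subset_insertI2)
    ultimately show ?thesis by blast
  qed
qed

section \<open>Directed tree decompositions\<close>

text \<open>The width of a directed tree decomposition is the largest size of a \<open>dtd_bag\<close>, minus one.\<close>

definition dtd_bag :: "(nat \<times> nat) set \<Rightarrow> (nat \<times> nat \<Rightarrow> 'a set) \<Rightarrow> (nat \<Rightarrow> 'a set) \<Rightarrow> nat \<Rightarrow> 'a set" where
  "dtd_bag ET X W t = W t \<union> (\<Union>e\<in>{e \<in> ET. fst e = t \<or> snd e = t}. X e)"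

definition has_dtd_bags_le :: "'a digraph \<Rightarrow> nat \<Rightarrow> bool" where
  "has_dtd_bags_le D k \<longleftrightarrow>
     (\<exists>VT ET r X W. dtree_decomp D VT ET r X W \<and> (\<forall>t\<in>VT. card (dtd_bag ET X W t) \<le> k))"

lemma dtree_decompD:
  assumes "dtree_decomp G VT ET r X W"
  shows "out_tree VT ET r" and "e \<in> ET \<Longrightarrow> X e \<subseteq> verts G"
    and "t \<in> VT \<Longrightarrow> W t \<noteq> {}" and "t \<in> VT \<Longrightarrow> W t \<subseteq> verts G"
    and "s \<in> VT \<Longrightarrow> t \<in> VT \<Longrightarrow> s \<noteq> t \<Longrightarrow> W s \<inter> W t = {}"
    and "(\<Union>t\<in>VT. W t) = verts G"
    and "(u, v) \<in> ET \<Longrightarrow> normal G (X (u, v)) (\<Union>t\<in>{t \<in> VT. (v, t) \<in> ET\<^sup>*}. W t)"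
  using assms unfolding dtree_decomp_def by (simp_all, fast+)

lemma has_dtd_bags_le_imp_dtw_less:
  assumes "finite (verts D)" "has_dtd_bags_le D k"
  shows "dtw D < k"
proof -
  obtain VT ET r X W where dd: "dtree_decomp D VT ET r X W"
    and bags: "\<forall>t\<in>VT. card (dtd_bag ET X W t) \<le> k"
    using assms(2) unfolding has_dtd_bags_le_def by blast
  have "dtw D \<le> dtd_width VT ET X W"
    unfolding dtw_def by (rule Least_le) (use dd in blast)
  also have "\<dots> = Max ((\<lambda>t. card (dtd_bag ET X W t)) ` VT) - 1"
    unfolding dtd_width_def dtd_bag_def ..
  also have "\<dots> < k"
  proof -
    have "finite VT" "r \<in> VT" using out_treeD(1,2)[OF dtree_decompD(1)[OF dd]] by auto
    have "dtd_bag ET X W r \<subseteq> verts D"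
      using dtree_decompD(2,4)[OF dd] \<open>r \<in> VT\<close> unfolding dtd_bag_def by blast
    moreover have "W r \<subseteq> dtd_bag ET X W r" "W r \<noteq> {}"
      using dtree_decompD(3)[OF dd \<open>r \<in> VT\<close>] unfolding dtd_bag_def by auto
    ultimately have "0 < card (dtd_bag ET X W r)"
      using finite_subset[OF _ assms(1)] by (auto simp: card_gt_0_iff)
    then have "0 < k" using bags \<open>r \<in> VT\<close> by fastforce
    moreover have "Max ((\<lambda>t. card (dtd_bag ET X W t)) ` VT) \<le> k"
      using bags \<open>finite VT\<close> \<open>r \<in> VT\<close> by (subst Max_le_iff) auto
    ultimately show ?thesis by linarith
  qed
  finally show ?thesis .
qed

lemma dtree_decomp_relabel:
  assumes "inj f" and dd: "dtree_decomp G VT ET r X W"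
  defines "X' \<equiv> X \<circ> map_prod (inv f) (inv f)" and "W' \<equiv> W \<circ> inv f"
  shows "dtree_decomp G (f ` VT) (map_prod f f ` ET) (f r) X' W'"
    and "dtd_bag (map_prod f f ` ET) X' W' (f t) = dtd_bag ET X W t"
proof -
  let ?ET = "map_prod f f ` ET"
  have inv: "inv f (f x) = x" for x using \<open>inj f\<close> by (rule inv_f_f)
  have X': "X' (f a, f b) = X (a, b)" for a b unfolding X'_def by (simp add: inv)
  have W': "W' (f t) = W t" for t unfolding W'_def by (simp add: inv)
  have desc: "{t \<in> f ` VT. (f v, t) \<in> ?ET\<^sup>*} = f ` {t \<in> VT. (v, t) \<in> ET\<^sup>*}" for v
    using rtrancl_map_prod_inj[OF \<open>inj f\<close>] by blast
  show "dtree_decomp G (f ` VT) ?ET (f r) X' W'"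
    unfolding dtree_decomp_def
  proof (intro conjI ballI impI)
    show "out_tree (f ` VT) ?ET (f r)"
      using out_tree_relabel[OF \<open>inj f\<close> dtree_decompD(1)[OF dd]] .
    show "X' e \<subseteq> verts G" if "e \<in> ?ET" for e
      using that dtree_decompD(2)[OF dd] X' by force
    show "W' t \<noteq> {}" "W' t \<subseteq> verts G" if "t \<in> f ` VT" for t
      using that dtree_decompD(3,4)[OF dd] W' by force+
    show "W' s \<inter> W' t = {}" if "s \<in> f ` VT" "t \<in> f ` VT" "s \<noteq> t" for s t
      using that dtree_decompD(5)[OF dd] W' by force
    show "(\<Union>t\<in>f ` VT. W' t) = verts G"
      using dtree_decompD(6)[OF dd] W' by simp
    show "case e of (u, v) \<Rightarrow> normal G (X' (u, v)) (\<Union>t\<in>{t \<in> f ` VT. (v, t) \<in> ?ET\<^sup>*}. W' t)"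
      if "e \<in> ?ET" for e
    proof -
      obtain a b where "e = (f a, f b)" "(a, b) \<in> ET" using \<open>e \<in> ?ET\<close> by auto
      moreover have "(\<Union>t\<in>{t \<in> f ` VT. (f b, t) \<in> ?ET\<^sup>*}. W' t) = (\<Union>t\<in>{t \<in> VT. (b, t) \<in> ET\<^sup>*}. W t)"
        unfolding desc by (simp add: W')
      ultimately show ?thesis using X' dtree_decompD(7)[OF dd] by simp
    qed
  qed
  have "{e \<in> ?ET. fst e = f t \<or> snd e = f t} = map_prod f f ` {e \<in> ET. fst e = t \<or> snd e = t}"
    using \<open>inj f\<close> by (auto simp: inj_eq)
  then show "dtd_bag ?ET X' W' (f t) = dtd_bag ET X W t"
    unfolding dtd_bag_def W' by (auto simp: X')
qed

text \<open>Two decompositions are glued by an arc from the root of the first to the root of the second,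
  with empty guard: no arc of \<open>order_comp G H\<close> leads back from \<open>H\<close> to \<open>G\<close>.\<close>

lemma dtree_decomp_order_comp:
  assumes dd1: "dtree_decomp G VT1 ET1 r1 X1 W1" and dd2: "dtree_decomp H VT2 ET2 r2 X2 W2"
    and "VT1 \<inter> VT2 = {}" "verts G \<inter> verts H = {}"
    and "arcs G \<subseteq> verts G \<times> verts G" "arcs H \<subseteq> verts H \<times> verts H"
  defines "X \<equiv> \<lambda>e. if e \<in> ET1 then X1 e else if e \<in> ET2 then X2 e else {}"
    and "W \<equiv> \<lambda>t. if t \<in> VT1 then W1 t else W2 t"
  shows "dtree_decomp (order_comp G H) (VT1 \<union> VT2) (insert (r1, r2) (ET1 \<union> ET2)) r1 X W"
proof -
  let ?ET = "insert (r1, r2) (ET1 \<union> ET2)"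
  note tree1 = dtree_decompD(1)[OF dd1] and tree2 = dtree_decompD(1)[OF dd2]
  note sub1 = out_treeD(3)[OF tree1] and sub2 = out_treeD(3)[OF tree2]
  have "r1 \<in> VT1" "r2 \<in> VT2" using out_treeD(2) tree1 tree2 by blast+
  have W1: "W t = W1 t" if "t \<in> VT1" for t using that unfolding W_def by simp
  have W2: "W t = W2 t" if "t \<in> VT2" for t using that \<open>VT1 \<inter> VT2 = {}\<close> unfolding W_def by auto
  note desc1 = out_tree_glue_descendants(1)[OF tree1 tree2 \<open>VT1 \<inter> VT2 = {}\<close>]
    and desc2 = out_tree_glue_descendants(2)[OF tree1 tree2 \<open>VT1 \<inter> VT2 = {}\<close>]
  have normal: "normal (order_comp G H) (X (u, v)) (\<Union>t\<in>{t \<in> VT1 \<union> VT2. (v, t) \<in> ?ET\<^sup>*}. W t)"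
    if uv: "(u, v) \<in> ?ET" for u v
  proof -
    consider "(u, v) \<in> ET1" | "(u, v) \<in> ET2" "(u, v) \<notin> ET1" | "(u, v) = (r1, r2)" "(u, v) \<notin> ET1 \<union> ET2"
      using uv by blast
    then show ?thesis
    proof cases
      case 1
      then have "v \<in> VT1" "v \<noteq> r1" using sub1 out_treeD(4)[OF tree1] by auto
      then have S: "(\<Union>t\<in>{t \<in> VT1 \<union> VT2. (v, t) \<in> ?ET\<^sup>*}. W t) = (\<Union>t\<in>{t \<in> VT1. (v, t) \<in> ET1\<^sup>*}. W1 t)"
        unfolding desc1[OF \<open>v \<in> VT1\<close> \<open>v \<noteq> r1\<close>] using W1 by simp
      have "(\<Union>t\<in>{t \<in> VT1. (v, t) \<in> ET1\<^sup>*}. W1 t) \<subseteq> verts G"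
        using dtree_decompD(4)[OF dd1] by blast
      from normal_order_comp_left[OF dtree_decompD(7)[OF dd1 1] this assms(5,6,4)]
      show ?thesis unfolding S X_def using 1 by simp
    next
      case 2
      then have "v \<in> VT2" using sub2 by auto
      then have S: "(\<Union>t\<in>{t \<in> VT1 \<union> VT2. (v, t) \<in> ?ET\<^sup>*}. W t) = (\<Union>t\<in>{t \<in> VT2. (v, t) \<in> ET2\<^sup>*}. W2 t)"
        unfolding desc2[OF \<open>v \<in> VT2\<close>] using W2 by simp
      have "(\<Union>t\<in>{t \<in> VT2. (v, t) \<in> ET2\<^sup>*}. W2 t) \<subseteq> verts H"
        using dtree_decompD(4)[OF dd2] by blast
      from normal_order_comp_right[OF dtree_decompD(7)[OF dd2 2(1)] this assms(5,6,4)]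
      show ?thesis unfolding S X_def using 2 by simp
    next
      case 3
      have "{t \<in> VT2. (r2, t) \<in> ET2\<^sup>*} = VT2" using out_treeD(6)[OF tree2] by blast
      then have "(\<Union>t\<in>{t \<in> VT1 \<union> VT2. (v, t) \<in> ?ET\<^sup>*}. W t) = verts H"
        using desc2[OF \<open>r2 \<in> VT2\<close>] 3 W2 dtree_decompD(6)[OF dd2] by simp
      moreover have "normal H {} (verts H)" unfolding normal_def by blast
      ultimately show ?thesis
        using normal_order_comp_right[of H "{}" "verts H"] assms(4-6) 3 unfolding X_def by simp
    qed
  qed
  show ?thesis
    unfolding dtree_decomp_def
  proof (intro conjI ballI impI)
    show "out_tree (VT1 \<union> VT2) ?ET r1" using out_tree_glue[OF tree1 tree2 \<open>VT1 \<inter> VT2 = {}\<close>] .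
    show "X e \<subseteq> verts (order_comp G H)" for e
      using dtree_decompD(2)[OF dd1, of e] dtree_decompD(2)[OF dd2, of e] unfolding X_def by auto
    show "W t \<noteq> {}" "W t \<subseteq> verts (order_comp G H)" if "t \<in> VT1 \<union> VT2" for t
      using that dtree_decompD(3,4)[OF dd1, of t] dtree_decompD(3,4)[OF dd2, of t] W1 W2 by auto
    show "W s \<inter> W t = {}" if st: "s \<in> VT1 \<union> VT2" "t \<in> VT1 \<union> VT2" "s \<noteq> t" for s t
    proof -
      consider "s \<in> VT1" "t \<in> VT1" | "s \<in> VT2" "t \<in> VT2" | "s \<in> VT1" "t \<in> VT2" | "s \<in> VT2" "t \<in> VT1"
        using st by blast
      then show ?thesis
      proof cases
        case 1
        then show ?thesis using dtree_decompD(5)[OF dd1] \<open>s \<noteq> t\<close> W1 by simp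
      next
        case 2
        then show ?thesis using dtree_decompD(5)[OF dd2] \<open>s \<noteq> t\<close> W2 by simp
      next
        case 3
        then show ?thesis
          using dtree_decompD(4)[OF dd1] dtree_decompD(4)[OF dd2] W1 W2 \<open>verts G \<inter> verts H = {}\<close> by blast
      next
        case 4
        then show ?thesis
          using dtree_decompD(4)[OF dd1] dtree_decompD(4)[OF dd2] W1 W2 \<open>verts G \<inter> verts H = {}\<close> by blast
      qed
    qed
    show "(\<Union>t\<in>VT1 \<union> VT2. W t) = verts (order_comp G H)"
      using dtree_decompD(6)[OF dd1] dtree_decompD(6)[OF dd2] W1 W2 by simp
    show "case e of (u, v) \<Rightarrow> normal (order_comp G H) (X (u, v)) (\<Union>t\<in>{t \<in> VT1 \<union> VT2. (v, t) \<in> ?ET\<^sup>*}. W t)"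
      if "e \<in> ?ET" for e
      using that normal by (cases e) simp
  qed
qed

lemma dtd_bag_glue:
  fixes X1 X2 :: "nat \<times> nat \<Rightarrow> 'a set" and W1 W2 :: "nat \<Rightarrow> 'a set"
  assumes tree1: "out_tree VT1 ET1 r1" and tree2: "out_tree VT2 ET2 r2" and "VT1 \<inter> VT2 = {}"
  defines "X \<equiv> \<lambda>e. if e \<in> ET1 then X1 e else if e \<in> ET2 then X2 e else {}"
    and "W \<equiv> \<lambda>t. if t \<in> VT1 then W1 t else W2 t"
  shows "t \<in> VT1 \<Longrightarrow> dtd_bag (insert (r1, r2) (ET1 \<union> ET2)) X W t = dtd_bag ET1 X1 W1 t"
    and "t \<in> VT2 \<Longrightarrow> dtd_bag (insert (r1, r2) (ET1 \<union> ET2)) X W t = dtd_bag ET2 X2 W2 t"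
proof -
  note sub1 = out_treeD(3)[OF tree1] and sub2 = out_treeD(3)[OF tree2]
  have "r1 \<in> VT1" "r2 \<in> VT2" using out_treeD(2) tree1 tree2 by blast+
  then have X0: "X (r1, r2) = {}" using sub1 sub2 \<open>VT1 \<inter> VT2 = {}\<close> unfolding X_def by auto
  have agree: "(\<Union>e\<in>{e \<in> insert (r1, r2) (ET1 \<union> ET2). fst e = t \<or> snd e = t}. X e)
      = (\<Union>e\<in>{e \<in> E. fst e = t \<or> snd e = t}. X' e)"
    if "E \<subseteq> ET1 \<union> ET2" "\<And>e. e \<in> E \<Longrightarrow> X e = X' e"
      and "\<And>e. e \<in> ET1 \<union> ET2 - E \<Longrightarrow> fst e \<noteq> t \<and> snd e \<noteq> t" for E X'
  proof (intro equalityI subsetI)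
    fix x assume "x \<in> (\<Union>e\<in>{e \<in> insert (r1, r2) (ET1 \<union> ET2). fst e = t \<or> snd e = t}. X e)"
    then obtain e where e: "e \<in> insert (r1, r2) (ET1 \<union> ET2)" "fst e = t \<or> snd e = t" "x \<in> X e" by blast
    then have "e \<in> E" using X0 that(3)[of e] by auto
    then have "e \<in> {e \<in> E. fst e = t \<or> snd e = t}" "x \<in> X' e" using e that(2)[of e] by auto
    then show "x \<in> (\<Union>e\<in>{e \<in> E. fst e = t \<or> snd e = t}. X' e)" by blast
  next
    fix x assume "x \<in> (\<Union>e\<in>{e \<in> E. fst e = t \<or> snd e = t}. X' e)"
    then obtain e where e: "e \<in> E" "fst e = t \<or> snd e = t" "x \<in> X' e" by blast
    then have "e \<in> {e \<in> insert (r1, r2) (ET1 \<union> ET2). fst e = t \<or> snd e = t}" "x \<in> X e"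
      using that(1) that(2)[of e] by auto
    then show "x \<in> (\<Union>e\<in>{e \<in> insert (r1, r2) (ET1 \<union> ET2). fst e = t \<or> snd e = t}. X e)"
      by blast
  qed
  show "dtd_bag (insert (r1, r2) (ET1 \<union> ET2)) X W t = dtd_bag ET1 X1 W1 t" if "t \<in> VT1"
  proof -
    have "fst e \<noteq> t \<and> snd e \<noteq> t" if "e \<in> ET2" for e
      using that sub2 \<open>t \<in> VT1\<close> \<open>VT1 \<inter> VT2 = {}\<close> by (auto dest!: subsetD)
    then have "(\<Union>e\<in>{e \<in> insert (r1, r2) (ET1 \<union> ET2). fst e = t \<or> snd e = t}. X e)
        = (\<Union>e\<in>{e \<in> ET1. fst e = t \<or> snd e = t}. X1 e)"
      by (intro agree) (auto simp: X_def)
    then show ?thesis using \<open>t \<in> VT1\<close> unfolding dtd_bag_def W_def by simp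
  qed
  show "dtd_bag (insert (r1, r2) (ET1 \<union> ET2)) X W t = dtd_bag ET2 X2 W2 t" if "t \<in> VT2"
  proof -
    have "fst e \<noteq> t \<and> snd e \<noteq> t" if "e \<in> ET1" for e
      using that sub1 \<open>t \<in> VT2\<close> \<open>VT1 \<inter> VT2 = {}\<close> by (auto dest!: subsetD)
    moreover have "X e = X2 e" if "e \<in> ET2" for e
      using that sub1 sub2 \<open>VT1 \<inter> VT2 = {}\<close> unfolding X_def by auto
    ultimately have "(\<Union>e\<in>{e \<in> insert (r1, r2) (ET1 \<union> ET2). fst e = t \<or> snd e = t}. X e)
        = (\<Union>e\<in>{e \<in> ET2. fst e = t \<or> snd e = t}. X2 e)"
      by (intro agree) auto
    moreover have "t \<notin> VT1" using \<open>t \<in> VT2\<close> \<open>VT1 \<inter> VT2 = {}\<close> by blast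
    ultimately show ?thesis unfolding dtd_bag_def W_def by simp
  qed
qed

lemma has_dtd_bags_le_order_comp:
  assumes "has_dtd_bags_le G kG" "has_dtd_bags_le H kH" "verts G \<inter> verts H = {}"
    and "arcs G \<subseteq> verts G \<times> verts G" "arcs H \<subseteq> verts H \<times> verts H"
  shows "has_dtd_bags_le (order_comp G H) (max kG kH)"
proof -
  obtain VT1 ET1 r1 X1 W1 where dd1: "dtree_decomp G VT1 ET1 r1 X1 W1"
    and bags1: "\<forall>t\<in>VT1. card (dtd_bag ET1 X1 W1 t) \<le> kG"
    using assms(1) unfolding has_dtd_bags_le_def by blast
  obtain VT2 ET2 r2 X2 W2 where dd2: "dtree_decomp H VT2 ET2 r2 X2 W2"
    and bags2: "\<forall>t\<in>VT2. card (dtd_bag ET2 X2 W2 t) \<le> kH"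
    using assms(2) unfolding has_dtd_bags_le_def by blast
  \<comment> \<open>move the two trees apart: even and odd node numbers\<close>
  define f1 f2 :: "nat \<Rightarrow> nat" where "f1 n = 2 * n" and "f2 n = 2 * n + 1" for n
  have "inj f1" "inj f2" unfolding inj_def f1_def f2_def by auto
  note R1 = dtree_decomp_relabel[OF \<open>inj f1\<close> dd1] and R2 = dtree_decomp_relabel[OF \<open>inj f2\<close> dd2]
  have apart: "f1 ` VT1 \<inter> f2 ` VT2 = {}" unfolding f1_def f2_def by (auto dest: arg_cong[where f = even])
  let ?VT = "f1 ` VT1 \<union> f2 ` VT2"
    and ?ET = "insert (f1 r1, f2 r2) (map_prod f1 f1 ` ET1 \<union> map_prod f2 f2 ` ET2)"
  obtain X W where dd: "dtree_decomp (order_comp G H) ?VT ?ET (f1 r1) X W"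
    and bag1: "\<And>t. t \<in> f1 ` VT1 \<Longrightarrow> dtd_bag ?ET X W t =
      dtd_bag (map_prod f1 f1 ` ET1) (X1 \<circ> map_prod (inv f1) (inv f1)) (W1 \<circ> inv f1) t"
    and bag2: "\<And>t. t \<in> f2 ` VT2 \<Longrightarrow> dtd_bag ?ET X W t =
      dtd_bag (map_prod f2 f2 ` ET2) (X2 \<circ> map_prod (inv f2) (inv f2)) (W2 \<circ> inv f2) t"
    by (rule that[OF dtree_decomp_order_comp[OF R1(1) R2(1) apart assms(3-5)]
      dtd_bag_glue[OF dtree_decompD(1)[OF R1(1)] dtree_decompD(1)[OF R2(1)] apart]])
  have "card (dtd_bag ?ET X W t) \<le> max kG kH" if "t \<in> ?VT" for t
    using that bag1 bag2 R1(2) R2(2) bags1 bags2 by (auto simp: le_max_iff_disj)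
  with dd show ?thesis unfolding has_dtd_bags_le_def by blast
qed

lemma dtree_decomp_arcs_mono:
  assumes dd: "dtree_decomp D VT ET r X W" and "verts D' = verts D" "arcs D' \<subseteq> arcs D"
  shows "dtree_decomp D' VT ET r X W"
  unfolding dtree_decomp_def
proof (intro conjI ballI impI)
  show "case e of (u, v) \<Rightarrow> normal D' (X (u, v)) (\<Union>t\<in>{t \<in> VT. (v, t) \<in> ET\<^sup>*}. W t)"
    if "e \<in> ET" for e
    using that dtree_decompD(7)[OF dd] normal_arcs_mono[OF _ assms(2,3)] by (cases e) simp
qed (use dtree_decompD[OF dd] assms(2) in auto)

lemma has_dtd_bags_le_disj_union:
  assumes "has_dtd_bags_le G kG" "has_dtd_bags_le H kH" "verts G \<inter> verts H = {}"
    and "arcs G \<subseteq> verts G \<times> verts G" "arcs H \<subseteq> verts H \<times> verts H"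
  shows "has_dtd_bags_le (disj_union G H) (max kG kH)"
proof -
  obtain VT ET r X W where dd: "dtree_decomp (order_comp G H) VT ET r X W"
    and bags: "\<forall>t\<in>VT. card (dtd_bag ET X W t) \<le> max kG kH"
    using has_dtd_bags_le_order_comp[OF assms] unfolding has_dtd_bags_le_def by blast
  have "dtree_decomp (disj_union G H) VT ET r X W"
    by (rule dtree_decomp_arcs_mono[OF dd]) auto
  with bags show ?thesis unfolding has_dtd_bags_le_def by blast
qed

lemma dtree_decomp_series_comp:
  assumes dd: "dtree_decomp G VT ET r X W" and "verts G \<inter> verts H = {}"
    and "arcs G \<subseteq> verts G \<times> verts G" "arcs H \<subseteq> verts H \<times> verts H"
  shows "dtree_decomp (series_comp G H) VT ET r (\<lambda>e. X e \<union> verts H) (W(r := W r \<union> verts H))"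
  unfolding dtree_decomp_def
proof (intro conjI ballI impI)
  let ?W = "W(r := W r \<union> verts H)"
  note tree = dtree_decompD(1)[OF dd]
  have "r \<in> VT" using out_treeD(2)[OF tree] .
  show "out_tree VT ET r" by (fact tree)
  show "X e \<union> verts H \<subseteq> verts (series_comp G H)" if "e \<in> ET" for e
    using dtree_decompD(2)[OF dd that] by auto
  show "?W t \<noteq> {}" "?W t \<subseteq> verts (series_comp G H)" if "t \<in> VT" for t
    using dtree_decompD(3,4)[OF dd that] by auto
  show "?W s \<inter> ?W t = {}" if "s \<in> VT" "t \<in> VT" "s \<noteq> t" for s t
    using dtree_decompD(5)[OF dd that] dtree_decompD(4)[OF dd] that \<open>verts G \<inter> verts H = {}\<close> by auto
  show "(\<Union>t\<in>VT. ?W t) = verts (series_comp G H)"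
    using dtree_decompD(6)[OF dd] \<open>r \<in> VT\<close> by (auto split: if_splits)
  show "case e of (u, v) \<Rightarrow> normal (series_comp G H) (X (u, v) \<union> verts H)
      (\<Union>t\<in>{t \<in> VT. (v, t) \<in> ET\<^sup>*}. ?W t)" if "e \<in> ET" for e
  proof (cases e)
    case (Pair u v)
    \<comment> \<open>the root is not below any arc, so only \<open>G\<close>-bags lie below \<open>(u, v)\<close>\<close>
    have "t \<noteq> r" if "(v, t) \<in> ET\<^sup>*" for t
      using that out_tree_rtrancl_to_root[OF tree] out_treeD(4)[OF tree] \<open>e \<in> ET\<close> Pair by blast
    then have "(\<Union>t\<in>{t \<in> VT. (v, t) \<in> ET\<^sup>*}. ?W t) = (\<Union>t\<in>{t \<in> VT. (v, t) \<in> ET\<^sup>*}. W t)"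
      by simp
    then show ?thesis
      using normal_series_comp[OF dtree_decompD(7)[OF dd] assms(3,4)] \<open>e \<in> ET\<close> Pair by simp
  qed
qed

lemma has_dtd_bags_le_series_comp:
  assumes "has_dtd_bags_le G k" "finite (verts G)" "finite (verts H)" "verts G \<inter> verts H = {}"
    and "arcs G \<subseteq> verts G \<times> verts G" "arcs H \<subseteq> verts H \<times> verts H"
  shows "has_dtd_bags_le (series_comp G H) (k + card (verts H))"
proof -
  obtain VT ET r X W where dd: "dtree_decomp G VT ET r X W"
    and bags: "\<forall>t\<in>VT. card (dtd_bag ET X W t) \<le> k"
    using assms(1) unfolding has_dtd_bags_le_def by blast
  let ?X = "\<lambda>e. X e \<union> verts H" and ?W = "W(r := W r \<union> verts H)"
  have "card (dtd_bag ET ?X ?W t) \<le> k + card (verts H)" if "t \<in> VT" for t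
  proof -
    have "dtd_bag ET X W t \<subseteq> verts G"
      using dtree_decompD(2,4)[OF dd] that unfolding dtd_bag_def by blast
    then have "finite (dtd_bag ET X W t \<union> verts H)" using assms(2,3) finite_subset by blast
    moreover have "dtd_bag ET ?X ?W t \<subseteq> dtd_bag ET X W t \<union> verts H" by (auto simp: dtd_bag_def)
    ultimately have "card (dtd_bag ET ?X ?W t) \<le> card (dtd_bag ET X W t \<union> verts H)"
      by (rule card_mono)
    also have "\<dots> \<le> card (dtd_bag ET X W t) + card (verts H)" by (rule card_Un_le)
    also have "\<dots> \<le> k + card (verts H)" using bags that by simp
    finally show ?thesis .
  qed
  with dtree_decomp_series_comp[OF dd assms(4-6)] show ?thesis
    unfolding has_dtd_bags_le_def by blast
qed

lemma has_dtd_bags_le_mono: "has_dtd_bags_le D k \<Longrightarrow> k \<le> k' \<Longrightarrow> has_dtd_bags_le D k'"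
  unfolding has_dtd_bags_le_def by (meson order_trans)

lemma has_dtd_bags_le_singleton: "has_dtd_bags_le ({v}, {}) 1"
proof -
  have "dtree_decomp ({v}, {}) {0} {} 0 (\<lambda>_. {}) (\<lambda>_. {v})"
    unfolding dtree_decomp_def out_tree_def by simp
  moreover have "card (dtd_bag {} (\<lambda>_. {}) (\<lambda>_. {v}) 0) = 1" by (simp add: dtd_bag_def)
  ultimately show ?thesis unfolding has_dtd_bags_le_def by fastforce
qed

section \<open>Directed co-graphs\<close>

lemma fst_un [simp]: "fst (un D) = verts D"
  by (simp add: un_def)

lemma un_edges_subset: "arcs D \<subseteq> verts D \<times> verts D \<Longrightarrow> \<forall>e\<in>snd (un D). e \<subseteq> fst (un D)"
  unfolding un_def by auto

lemma un_disj_union: "un (disj_union G H) = (verts G \<union> verts H, snd (un G) \<union> snd (un H))"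
  unfolding un_def by auto

lemma un_order_comp:
  "un (order_comp G H) =
    (verts G \<union> verts H, snd (un G) \<union> snd (un H) \<union> {{a, b} | a b. a \<in> verts G \<and> b \<in> verts H})"
  unfolding un_def by auto

lemma un_series_comp: "un (series_comp G H) = un (order_comp G H)"
  unfolding un_def by (auto simp: insert_commute)

lemma has_bramble_order_comp:
  assumes "has_bramble (un G) kG" "has_bramble (un H) kH" "verts G \<inter> verts H = {}"
  shows "has_bramble (un (order_comp G H)) (min (card (verts G) + kH) (kG + card (verts H)))"
proof -
  have "un D = (verts D, snd (un D))" for D :: "'a digraph" by (simp add: prod_eq_iff)
  then show ?thesis
    using has_bramble_join[of "verts G" "snd (un G)" kG "verts H" "snd (un H)" kH] assms
    unfolding un_order_comp by metis
qed

lemma dcograph_wf: "dcograph D \<Longrightarrow> finite (verts D) \<and> arcs D \<subseteq> verts D \<times> verts D"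
  by (induction rule: dcograph.induct) auto

definition dtw_below_bramble :: "'a digraph \<Rightarrow> nat \<Rightarrow> bool" where
  "dtw_below_bramble D k \<longleftrightarrow> has_dtd_bags_le D k \<and> has_bramble (un D) k"

lemma dtw_below_bramble_singleton: "dtw_below_bramble ({v}, {}) 1"
proof -
  have "un ({v}, {}) = ({v}, {})" by (simp add: un_def)
  then show ?thesis
    unfolding dtw_below_bramble_def using has_dtd_bags_le_singleton[of v] has_bramble_singleton[of v]
    by simp
qed

lemma dtw_below_bramble_disj_union:
  assumes "dtw_below_bramble G kG" "dtw_below_bramble H kH" "verts G \<inter> verts H = {}"
    and "arcs G \<subseteq> verts G \<times> verts G" "arcs H \<subseteq> verts H \<times> verts H"
  shows "dtw_below_bramble (disj_union G H) (max kG kH)"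
proof -
  have "has_bramble (un (disj_union G H)) (max kG kH)"
  proof (cases "kH \<le> kG")
    case True
    then show ?thesis
      using assms(1) has_bramble_mono[of "un G" kG] unfolding dtw_below_bramble_def un_disj_union by auto
  next
    case False
    then show ?thesis
      using assms(2) has_bramble_mono[of "un H" kH] unfolding dtw_below_bramble_def un_disj_union by auto
  qed
  then show ?thesis
    using assms has_dtd_bags_le_disj_union unfolding dtw_below_bramble_def by blast
qed

lemma dtw_below_bramble_order_comp:
  assumes "dtw_below_bramble G kG" "dtw_below_bramble H kH" "verts G \<inter> verts H = {}"
    and "finite (verts G)" "finite (verts H)"
    and "arcs G \<subseteq> verts G \<times> verts G" "arcs H \<subseteq> verts H \<times> verts H"
  shows "dtw_below_bramble (order_comp G H) (min (card (verts G) + kH) (kG + card (verts H)))"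
proof -
  have "kG \<le> card (verts G)" "kH \<le> card (verts H)"
    using assms(1,2,4,5) has_bramble_le_card[of "un G"] has_bramble_le_card[of "un H"]
    unfolding dtw_below_bramble_def by auto
  then have "max kG kH \<le> min (card (verts G) + kH) (kG + card (verts H))" by simp
  moreover have "has_dtd_bags_le (order_comp G H) (max kG kH)"
    using assms(1,2) has_dtd_bags_le_order_comp[OF _ _ assms(3,6,7)] unfolding dtw_below_bramble_def
    by blast
  ultimately have "has_dtd_bags_le (order_comp G H) (min (card (verts G) + kH) (kG + card (verts H)))"
    by (rule has_dtd_bags_le_mono[rotated])
  then show ?thesis
    using assms(1,2) has_bramble_order_comp[OF _ _ assms(3)] unfolding dtw_below_bramble_def by blast
qed

lemma dtw_below_bramble_series_comp:
  assumes "dtw_below_bramble G kG" "dtw_below_bramble H kH" "verts G \<inter> verts H = {}"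
    and "finite (verts G)" "finite (verts H)"
    and "arcs G \<subseteq> verts G \<times> verts G" "arcs H \<subseteq> verts H \<times> verts H"
  shows "dtw_below_bramble (series_comp G H) (min (card (verts G) + kH) (kG + card (verts H)))"
proof -
  have "verts H \<inter> verts G = {}" using assms(3) by blast
  have "has_dtd_bags_le (series_comp G H) (kG + card (verts H))"
    using assms(1) has_dtd_bags_le_series_comp[OF _ assms(4,5,3,6,7)]
    unfolding dtw_below_bramble_def by blast
  moreover have "has_dtd_bags_le (series_comp G H) (kH + card (verts G))"
    using assms(2) has_dtd_bags_le_series_comp[OF _ assms(5,4) \<open>verts H \<inter> verts G = {}\<close> assms(7,6)]
    unfolding dtw_below_bramble_def series_comp_commute[of H] by blast
  ultimately have "has_dtd_bags_le (series_comp G H) (min (card (verts G) + kH) (kG + card (verts H)))"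
    by (simp add: min_def add.commute)
  then show ?thesis
    using assms(1,2) has_bramble_order_comp[OF _ _ assms(3)]
    unfolding dtw_below_bramble_def un_series_comp by blast
qed

lemma dcograph_dtw_below_bramble: "dcograph D \<Longrightarrow> \<exists>k. dtw_below_bramble D k"
proof (induction rule: dcograph.induct)
  case (single v)
  show ?case using dtw_below_bramble_singleton[of v] by blast
next
  case (union G H)
  then show ?case
    using dtw_below_bramble_disj_union dcograph_wf unfolding vdisjoint_def by blast
next
  case (series G H)
  then show ?case
    using dtw_below_bramble_series_comp dcograph_wf unfolding vdisjoint_def by blast
next
  case (order G H)
  then show ?case
    using dtw_below_bramble_order_comp dcograph_wf unfolding vdisjoint_def by blast
qed

theorem lemma4p11:
  fixes G H :: "'a digraph"
  assumes "dcograph G" and "dcograph H" and "vdisjoint G H"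
  shows "tw (un (order_comp G H)) > dtw (order_comp G H)"
proof -
  obtain kG kH where G: "has_dtd_bags_le G kG" "has_bramble (un G) kG"
    and H: "has_dtd_bags_le H kH" "has_bramble (un H) kH"
    using dcograph_dtw_below_bramble assms(1,2) unfolding dtw_below_bramble_def by blast
  have disj: "verts G \<inter> verts H = {}" using assms(3) unfolding vdisjoint_def .
  note wf = dcograph_wf[OF assms(1)] dcograph_wf[OF assms(2)]
  have "dtw (order_comp G H) < max kG kH"
    using has_dtd_bags_le_order_comp[OF G(1) H(1) disj] wf by (intro has_dtd_bags_le_imp_dtw_less) auto
  moreover have "min (card (verts G) + kH) (kG + card (verts H)) \<le> tw (un (order_comp G H)) + 1"
    using has_bramble_order_comp[OF G(2) H(2) disj] un_edges_subset[of "order_comp G H"] wf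
    by (intro has_bramble_imp_tw_ge) auto
  moreover have "kG \<le> card (verts G)" "kH \<le> card (verts H)"
    using has_bramble_le_card[of "un G"] has_bramble_le_card[of "un H"] G(2) H(2) wf by auto
  moreover have "0 < kG" "0 < kH"
    using has_dtd_bags_le_imp_dtw_less[OF _ G(1)] has_dtd_bags_le_imp_dtw_less[OF _ H(1)] wf by auto
  ultimately show ?thesis by (simp add: max_def min_def split: if_splits)
qed

end
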